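(* Assume the setting and standing assumptions described in the context, and let $d>0$ be such that $\Xi\subset\Omega_d=\{z\in\mathbb{R}^{2n}:|z|<d\}$. Let $p\ge1$, $\epsilon>0$, and let $\delta_0,\dots,\delta_p\in\mathbb{R}$ satisfy: (1) $\mathcal{L}_F^p\phi(z)\le\sum_{i=0}^{p-1}\delta_i\mathcal{L}_F^i\phi(z)+\delta_p$ for all $z\in\Omega_d$; (2) $\delta_0\phi((x,0))+\delta_p\ge\epsilon$ for all $x\in\mathrm{Z}$; (3) $\delta_i\ge0$ for $i=0,\dots,p$. Let $r>0$ be such that $D=\{x\in\mathbb{R}^n:|x|=r\}\subset\mathrm{Z}$. Let $A$ be the $(p+1)\times(p+1)$ matrix with $A_{k,k+1}=1$ for $k=1,\dots,p-1$, $p$-th row $(\delta_0,\dots,\delta_{p-1},1)$, last row zero and all other entries zero; let $C=(1,0,\dots,0)$. For $x\in\mathbb{R}^n\setminus\{0\}$ and $t\ge0$ define $$\mu(x,t)=C\Big(\tfrac{|x|}{r}\Big)^{\theta+1}e^{A(\frac{|x|}{r})^{\alpha}t}\begin{bmatrix}\phi\big((r\tfrac{x}{|x|},0)\big)\\ \max\big(\mathcal{L}_F\phi((r\tfrac{x}{|x|},0)),0\big)\\ \vdots\\ \max\big(\mathcal{L}_F^{p-1}\phi((r\tfrac{x}{|x|},0)),0\big)\\ \delta_p\end{bmatrix}.$$ Then $\mu$ satisfies: (a) $\mu(x,0)<0$ for all $x\ne0$; (b) $\mu(x,t)\ge\phi(\xi(t;x))$ for all $t\in[0,\tau(x)]$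 and all $x\neq0$; (c) $\mu(\lambda x,t)=\lambda^{\theta+1}\mu(x,\lambda^\alpha t)$ for all $t,\lambda>0$, $x\ne0$; (d) for every $x\ne0$ there exists a unique $\tau_x$ with $\mu(x,\tau_x)=0$.
   Context: Let $f:\mathbb{R}^n\times\mathbb{R}^m\to\mathbb{R}^n$ and a feedback law $\upsilon:\mathbb{R}^n\to\mathbb{R}^m$ be given. Define $F:\mathbb{R}^{2n}\to\mathbb{R}^{2n}$ by $F(z,e)=\big(f(z,\upsilon(z+e)),\,-f(z,\upsilon(z+e))\big)$. For $x\in\mathbb{R}^n$, $\xi(t;x)$ denotes the solution of $\dot\xi=F(\xi)$ with $\xi(0;x)=(x,0)$. A triggering function $\phi:\mathbb{R}^{2n}\to\mathbb{R}$ is given, and $\tau(x)=\inf\{t>0:\phi(\xi(t;x))=0\}$. $\mathcal{L}_F^k\phi$ denotes the $k$-th Lie derivative of $\phi$ along $F$ ($\mathcal{L}_F^0\phi=\phi$). Standing assumptions: (i) $F$ is smooth and homogeneous of degree $\alpha\ge1$ with all weights $1$, i.e. $F(\lambda\xi)=\lambda^{\alpha+1}F(\xi)$ for all $\lambda>0$; (ii) $\phi$ is smooth and homogeneous of degree $\theta\ge1$ with weights $1$, i.e. $\phi(\lambda\xi)=\lambda^{\theta+1}\phi(\xi)$ for all $\lambda>0$; (iii) for every $x\ne0$, $\phi((x,0))<0$ and there exists $t_x\in(0,\infty)$ with $\phi(\xi(t_x;x))=0$; (iv) compact sets $\mathrm{Z}\subset\mathbb{R}^n$, $\Xi\subset\mathbb{R}^{2n}$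 containing a neighbourhood of the origin are given such that for all $x\in\mathrm{Z}$, $t\ge0$: $\phi(\xi(t;x))\le0\Rightarrow\xi(t;x)\in\Xi$; (v) the origin is the only equilibrium of $\dot\zeta=f(\zeta,\upsilon(\zeta))$. *)

theory Defs
  imports "HOL-Analysis.Analysis"
begin

text \<open>C^k: C^0 = continuous; C^(k+1) = differentiable everywhere and every
  directional derivative map  x \<mapsto> Dg(x) v  is C^k (in finite dimension
  this is the same as Dg being C^k).\<close>
fun Ck :: "nat \<Rightarrow> ('a::real_normed_vector \<Rightarrow> 'b::real_normed_vector) \<Rightarrow> bool" where
  "Ck 0 g = continuous_on UNIV g"
| "Ck (Suc k) g = ((\<forall>x. g differentiable (at x)) \<and>
                    (\<forall>v. Ck k (\<lambda>x. frechet_derivative g (at x) v)))"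

definition smooth_fun :: "('a::real_normed_vector \<Rightarrow> 'b::real_normed_vector) \<Rightarrow> bool" where
  "smooth_fun g \<longleftrightarrow> (\<forall>k. Ck k g)"

definition Fvf :: "(real^'n \<Rightarrow> real^'m \<Rightarrow> real^'n) \<Rightarrow> (real^'n \<Rightarrow> real^'m)
                   \<Rightarrow> ((real^'n) \<times> (real^'n)) \<Rightarrow> ((real^'n) \<times> (real^'n))" where
  "Fvf f u = (\<lambda>(z, e). (f z (u (z + e)), - f z (u (z + e))))"

fun lie :: "('a::real_normed_vector \<Rightarrow> 'a) \<Rightarrow> ('a \<Rightarrow> real) \<Rightarrow> nat \<Rightarrow> 'a \<Rightarrow> real" where
  "lie F phi 0 = phi"
| "lie F phi (Suc k) = (\<lambda>z. frechet_derivative (lie F phi k) (at z) (F z))"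

definition mat_mul :: "nat \<Rightarrow> (nat \<Rightarrow> nat \<Rightarrow> real) \<Rightarrow> (nat \<Rightarrow> nat \<Rightarrow> real) \<Rightarrow> nat \<Rightarrow> nat \<Rightarrow> real" where
  "mat_mul N X Y = (\<lambda>i j. \<Sum>k<N. X i k * Y k j)"

fun mat_pow :: "nat \<Rightarrow> (nat \<Rightarrow> nat \<Rightarrow> real) \<Rightarrow> nat \<Rightarrow> nat \<Rightarrow> nat \<Rightarrow> real" where
  "mat_pow N X 0 = (\<lambda>i j. if i = j then 1 else 0)"
| "mat_pow N X (Suc k) = mat_mul N (mat_pow N X k) X"

definition mat_exp :: "nat \<Rightarrow> (nat \<Rightarrow> nat \<Rightarrow> real) \<Rightarrow> nat \<Rightarrow> nat \<Rightarrow> real" where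
  "mat_exp N X = (\<lambda>i j. \<Sum>k. mat_pow N X k i j / fact k)"

text \<open>The (p+1)x(p+1) matrix A, 0-based indices 0..p: A(k,k+1) = 1 for k = 0..p-2,
  row p-1 is (delta_0, ..., delta_(p-1), 1), last row (index p) zero.\<close>
definition Amat :: "(nat \<Rightarrow> real) \<Rightarrow> nat \<Rightarrow> nat \<Rightarrow> nat \<Rightarrow> real" where
  "Amat \<delta> p = (\<lambda>i j.
     if i + 1 < p \<and> j = i + 1 then 1
     else if i + 1 = p \<and> j < p then \<delta> j
     else if i + 1 = p \<and> j = p then 1
     else 0)"

definition w0 :: "(((real^'n) \<times> (real^'n)) \<Rightarrow> ((real^'n) \<times> (real^'n))) \<Rightarrow> (((real^'n) \<times> (real^'n)) \<Rightarrow> real)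
                  \<Rightarrow> (nat \<Rightarrow> real) \<Rightarrow> nat \<Rightarrow> real \<Rightarrow> real^'n \<Rightarrow> nat \<Rightarrow> real" where
  "w0 F phi \<delta> p r x = (\<lambda>j.
     let y = ((r / norm x) *\<^sub>R x, 0) in
     if j = 0 then phi y
     else if j < p then max (lie F phi j y) 0
     else \<delta> p)"

definition mu :: "(((real^'n) \<times> (real^'n)) \<Rightarrow> ((real^'n) \<times> (real^'n))) \<Rightarrow> (((real^'n) \<times> (real^'n)) \<Rightarrow> real)
                  \<Rightarrow> real \<Rightarrow> real \<Rightarrow> (nat \<Rightarrow> real) \<Rightarrow> nat \<Rightarrow> real \<Rightarrow> real^'n \<Rightarrow> real \<Rightarrow> real" where
  "mu F phi \<alpha> \<theta> \<delta> p r x t =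
     (let s = norm x / r;
          E = mat_exp (p + 1) (\<lambda>i j. (s powr \<alpha> * t) * Amat \<delta> p i j)
      in s powr (\<theta> + 1) * (\<Sum>j\<le>p. E 0 j * w0 F phi \<delta> p r x j))"

definition tau_ev :: "(real^'n \<Rightarrow> real \<Rightarrow> ((real^'n) \<times> (real^'n))) \<Rightarrow> (real^'n \<Rightarrow> ereal)
                      \<Rightarrow> (((real^'n) \<times> (real^'n)) \<Rightarrow> real) \<Rightarrow> real^'n \<Rightarrow> real" where
  "tau_ev xi T phi x = Inf {t. 0 < t \<and> ereal t < T x \<and> phi (xi x t) = 0}"

end

(*
  Write x = s y with s = |x|/r and |y| = r.  Homogeneity of F and phi gives
  xi(t; s y) = s xi(s^alpha t; y), and mu(x, t) = s^(theta+1) v(s^alpha t)_0, where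
  v(t) = exp(t A) w solves v' = A v.  Along the trajectory from y, up to the first
  triggering time, g_i = L_F^i phi(xi) satisfies g_i' = g_(i+1) and, by (1),
  g_(p-1)' <= sum delta_i g_i + delta_p, while g_i(0) <= v_i(0).  Since delta >= 0, the
  differences v_i - g_i obey a cooperative linear differential inequality and hence stay
  nonnegative; this gives (b).  Comparing v in the same way with the explicit
  subsolution phi(y,0) + epsilon t^p / p! (using (2)) shows that v_0 is strictly
  increasing and unbounded, which gives (d); (a) and (c) are read off the formula.
*)
theory Submission
  imports Defs
begin

section \<open>Smoothness of iterated Lie derivatives\<close>

lemma Ck_SucD: "Ck (Suc k) g \<Longrightarrow> Ck k g"
proof (induction k arbitrary: g)
  case 0
  then show ?case
    by (auto intro!: continuous_at_imp_continuous_on differentiable_imp_continuous_within)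
next
  case (Suc k)
  then show ?case by (metis Ck.simps(2))
qed

lemma Ck_const: "Ck k (\<lambda>x::'a::real_normed_vector. c::'b::real_normed_vector)"
  by (induction k arbitrary: c) simp_all

lemma Ck_add: "Ck k f \<Longrightarrow> Ck k g \<Longrightarrow> Ck k (\<lambda>x. f x + g x)"
proof (induction k arbitrary: f g)
  case 0
  then show ?case by (auto intro: continuous_on_add)
next
  case (Suc k)
  have "frechet_derivative (\<lambda>x. f x + g x) (at x)
      = (\<lambda>v. frechet_derivative f (at x) v + frechet_derivative g (at x) v)" for x
    using Suc.prems
    by (intro frechet_derivative_at[symmetric] has_derivative_add) (auto simp: frechet_derivative_works)
  with Suc show ?case by (simp add: differentiable_add)
qed

lemma Ck_sum: "(\<And>i. i \<in> I \<Longrightarrow> Ck k (f i)) \<Longrightarrow> Ck k (\<lambda>x. \<Sum>i\<in>I. f i x)"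
  by (induction I rule: infinite_finite_induct) (auto intro: Ck_add Ck_const)

lemma Ck_mult: "Ck k (f::'a::real_normed_vector \<Rightarrow> real) \<Longrightarrow> Ck k g \<Longrightarrow> Ck k (\<lambda>x. f x * g x)"
proof (induction k arbitrary: f g)
  case 0
  then show ?case by (auto intro: continuous_on_mult)
next
  case (Suc k)
  have "frechet_derivative (\<lambda>x. f x * g x) (at x)
      = (\<lambda>v. f x * frechet_derivative g (at x) v + frechet_derivative f (at x) v * g x)" for x
    using Suc.prems
    by (intro frechet_derivative_at[symmetric] has_derivative_mult) (auto simp: frechet_derivative_works)
  moreover have "Ck k f" "Ck k g"
    using Suc.prems by (auto intro: Ck_SucD)
  ultimately show ?case
    using Suc by (simp add: differentiable_mult Ck_add)
qed

lemma Ck_bounded_linear_comp: "bounded_linear L \<Longrightarrow> Ck k g \<Longrightarrow> Ck k (\<lambda>x. L (g x))"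
proof (induction k arbitrary: g)
  case 0
  then show ?case
    using continuous_on_compose2[of UNIV L UNIV g] linear_continuous_on by auto
next
  case (Suc k)
  have "((\<lambda>x. L (g x)) has_derivative (\<lambda>v. L (frechet_derivative g (at x) v))) (at x)" for x
    using Suc.prems by (auto intro: bounded_linear.has_derivative simp: frechet_derivative_works)
  then have "frechet_derivative (\<lambda>x. L (g x)) (at x) = (\<lambda>v. L (frechet_derivative g (at x) v))"
    and "(\<lambda>x. L (g x)) differentiable (at x)" for x
    by (auto intro: frechet_derivative_at[symmetric] differentiableI)
  with Suc show ?case by simp
qed

lemma frechet_derivative_eq_sum_Basis:
  fixes g :: "'a::euclidean_space \<Rightarrow> real"
  assumes "g differentiable (at z)"
  shows "frechet_derivative g (at z) w = (\<Sum>b\<in>Basis. (w \<bullet> b) * frechet_derivative g (at z) b)"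
proof -
  have l: "linear (frechet_derivative g (at z))"
    using assms by (rule linear_frechet_derivative)
  have "frechet_derivative g (at z) w = frechet_derivative g (at z) (\<Sum>b\<in>Basis. (w \<bullet> b) *\<^sub>R b)"
    by (simp add: euclidean_representation)
  also have "\<dots> = (\<Sum>b\<in>Basis. (w \<bullet> b) * frechet_derivative g (at z) b)"
    by (simp add: linear_sum[OF l] linear_cmul[OF l])
  finally show ?thesis .
qed

lemma smooth_fun_lie:
  fixes F :: "'a::euclidean_space \<Rightarrow> 'a"
  assumes F: "smooth_fun F" and phi: "smooth_fun phi"
  shows "smooth_fun (lie F phi k)"
proof (induction k)
  case 0
  then show ?case using phi by simp
next
  case (Suc k)
  then have Ck_lie: "Ck (Suc m) (lie F phi k)" for m
    unfolding smooth_fun_def by blast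
  then have "lie F phi (Suc k)
      = (\<lambda>z. \<Sum>b\<in>Basis. (F z \<bullet> b) * frechet_derivative (lie F phi k) (at z) b)"
    unfolding lie.simps using Ck_lie[of 0] by (auto intro: frechet_derivative_eq_sum_Basis)
  moreover have "Ck m (\<lambda>z. frechet_derivative (lie F phi k) (at z) b)" for m b
    using Ck_lie by simp
  moreover have "Ck m (\<lambda>z. F z \<bullet> b)" for m b
    using F unfolding smooth_fun_def
    by (intro Ck_bounded_linear_comp[where L="\<lambda>y. y \<bullet> b"] bounded_linear_inner_left) auto
  ultimately show ?case
    unfolding smooth_fun_def by (auto intro!: Ck_sum Ck_mult)
qed

lemma lie_differentiable:
  fixes F :: "'a::euclidean_space \<Rightarrow> 'a"
  assumes "smooth_fun F" "smooth_fun phi"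
  shows "lie F phi k differentiable (at z)"
  using smooth_fun_lie[OF assms, of k] unfolding smooth_fun_def by (metis Ck.simps(2))

section \<open>Uniqueness of solutions of \<open>C\<^sup>1\<close> ODEs\<close>

lemma DERIV_within_ge_imp_ge:
  fixes f :: "real \<Rightarrow> real"
  assumes "a \<le> b"
    and "\<And>t. t \<in> {a..b} \<Longrightarrow> (f has_real_derivative f' t) (at t within {a..b})"
    and "\<And>t. t \<in> {a..b} \<Longrightarrow> - M \<le> f' t"
  shows "f a - M * (b - a) \<le> f b"
proof -
  obtain z where "z \<in> {a..b}" "f b - f a = f' z * (b - a)"
    using mvt_very_simple[OF \<open>a \<le> b\<close>, of f "\<lambda>t h. f' t * h"] assms(2)
    unfolding has_field_derivative_def by auto
  moreover have "- M * (b - a) \<le> f' z * (b - a)"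
    using assms(1) assms(3)[OF \<open>z \<in> {a..b}\<close>] by (intro mult_right_mono) auto
  ultimately show ?thesis
    by simp
qed

lemma C1_lipschitz_on_cball:
  fixes F :: "'a::euclidean_space \<Rightarrow> 'b::real_normed_vector"
  assumes "Ck (Suc 0) F"
  obtains L where "L-lipschitz_on (cball 0 R) F"
proof -
  let ?G = "\<lambda>x. \<Sum>b\<in>Basis. norm (frechet_derivative F (at x) b)"
  have dF: "(F has_derivative frechet_derivative F (at x)) (at x)" for x
    using assms by (simp add: frechet_derivative_works)
  have "continuous_on UNIV ?G"
    using assms by (intro continuous_on_sum continuous_on_norm) simp
  then have "bounded (?G ` cball 0 R)"
    by (meson compact_imp_bounded compact_continuous_image compact_cball continuous_on_subset subset_UNIV)
  then obtain B where "\<forall>x\<in>cball 0 R. norm (?G x) \<le> B"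
    by (auto simp: bounded_iff)
  then have B: "?G x \<le> max B 0" if "x \<in> cball 0 R" for x
    using that by fastforce
  have "norm (F x - F y) \<le> max B 0 * norm (x - y)" if "x \<in> cball 0 R" "y \<in> cball 0 R" for x y
  proof (rule differentiable_bound[OF convex_cball _ _ that])
    fix z assume z: "z \<in> cball (0::'a) R"
    show "(F has_derivative frechet_derivative F (at z)) (at z within cball 0 R)"
      using dF by (rule has_derivative_at_withinI)
    show "onorm (frechet_derivative F (at z)) \<le> max B 0"
      by (rule onorm_componentwise_le[OF has_derivative_bounded_linear[OF dF] B[OF z]])
  qed
  then show ?thesis
    using that lipschitz_onI[of "cball 0 R" F "max B 0"] by (simp add: dist_norm)
qed

lemma gronwall_zero_initial:
  fixes w w' :: "real \<Rightarrow> real"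
  assumes "0 \<le> b"
    and dw: "\<And>t. t \<in> {0..b} \<Longrightarrow> (w has_real_derivative w' t) (at t within {0..b})"
    and w'_le: "\<And>t. t \<in> {0..b} \<Longrightarrow> w' t \<le> K * w t" and "w 0 = 0"
  shows "w b \<le> 0"
proof -
  define h' where "h' t = - exp (- K * t) * (w' t - K * w t)" for t
  have "((\<lambda>t. - (exp (- K * t) * w t)) has_real_derivative h' t) (at t within {0..b})"
    if "t \<in> {0..b}" for t
    unfolding h'_def by (rule derivative_eq_intros dw[OF that] refl)+ (simp add: algebra_simps)
  moreover have "- 0 \<le> h' t" if "t \<in> {0..b}" for t
    using w'_le[OF that] by (simp add: h'_def mult_le_0_iff)
  ultimately have "- (exp (- K * 0) * w 0) - 0 * (b - 0) \<le> - (exp (- K * b) * w b)"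
    by (intro DERIV_within_ge_imp_ge[OF \<open>0 \<le> b\<close>])
  then show ?thesis
    using \<open>w 0 = 0\<close> by (simp add: mult_le_0_iff)
qed

lemma ode_solution_unique_C1:
  fixes F :: "'a::euclidean_space \<Rightarrow> 'a"
  assumes F: "Ck (Suc 0) F" and "0 \<le> b"
    and x_sol: "\<And>t. t \<in> {0..b} \<Longrightarrow> (x has_vector_derivative F (x t)) (at t within {0..b})"
    and y_sol: "\<And>t. t \<in> {0..b} \<Longrightarrow> (y has_vector_derivative F (y t)) (at t within {0..b})"
    and init: "x 0 = y 0"
  shows "x b = y b"
proof -
  have "continuous_on {0..b} x" "continuous_on {0..b} y"
    using x_sol y_sol by (meson continuous_on_eq_continuous_within has_vector_derivative_continuous)+
  then have "bounded (x ` {0..b} \<union> y ` {0..b})"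
    by (simp add: compact_imp_bounded compact_continuous_image)
  then obtain R where R: "\<And>t. t \<in> {0..b} \<Longrightarrow> x t \<in> cball 0 R \<and> y t \<in> cball 0 R"
    unfolding bounded_iff by (metis UnCI image_eqI mem_cball_0)
  obtain L where L: "L-lipschitz_on (cball 0 R) F"
    using C1_lipschitz_on_cball[OF F] .
  define w where "w t = (x t - y t) \<bullet> (x t - y t)" for t
  define w' where "w' t = 2 * ((x t - y t) \<bullet> (F (x t) - F (y t)))" for t
  have "(w has_real_derivative w' t) (at t within {0..b})" if "t \<in> {0..b}" for t
  proof -
    have "((\<lambda>t. x t - y t) has_derivative (\<lambda>s. s *\<^sub>R (F (x t) - F (y t)))) (at t within {0..b})"
      using has_vector_derivative_diff[OF x_sol[OF that] y_sol[OF that]] by (simp add: has_vector_derivative_def)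
    from has_derivative_inner[OF this this] show ?thesis
      unfolding w_def w'_def has_field_derivative_def
      by (rule has_derivative_eq_rhs) (auto simp: fun_eq_iff inner_commute algebra_simps)
  qed
  moreover have "w' t \<le> 2 * L * w t" if "t \<in> {0..b}" for t
  proof -
    have "w' t \<le> 2 * (norm (x t - y t) * norm (F (x t) - F (y t)))"
      unfolding w'_def using norm_cauchy_schwarz[of "x t - y t" "F (x t) - F (y t)"] by linarith
    also have "\<dots> \<le> 2 * (norm (x t - y t) * (L * norm (x t - y t)))"
      using lipschitz_on_normD[OF L] R[OF that] by (intro mult_left_mono) auto
    also have "\<dots> = 2 * L * norm (x t - y t) ^ 2"
      by (simp add: power2_eq_square)
    also have "\<dots> = 2 * L * w t"
      unfolding w_def by (simp only: power2_norm_eq_inner)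
    finally show ?thesis .
  qed
  moreover have "w 0 = 0"
    by (simp add: w_def init)
  ultimately have "w b \<le> 0"
    using gronwall_zero_initial[OF \<open>0 \<le> b\<close>] by blast
  then show ?thesis
    unfolding w_def by (metis inner_gt_zero_iff not_le right_minus_eq)
qed

section \<open>The matrix exponential series\<close>

lemma mat_pow_scale: "mat_pow N (\<lambda>i j. c * X i j) k = (\<lambda>i j. c ^ k * mat_pow N X k i j)"
  by (induction k) (auto simp: mat_mul_def fun_eq_iff sum_distrib_left algebra_simps)

lemma mat_pow_Suc_left:
  assumes "i < N" "j < N"
  shows "mat_pow N X (Suc k) i j = (\<Sum>l<N. X i l * mat_pow N X k l j)"
  using assms
proof (induction k arbitrary: i j)
  case 0
  then show ?case
    by (simp add: mat_mul_def if_distrib if_distribR sum.delta sum.delta' cong: if_cong)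
next
  case (Suc k)
  have "mat_pow N X (Suc (Suc k)) i j = (\<Sum>m<N. mat_pow N X (Suc k) i m * X m j)"
    by (simp add: mat_mul_def)
  also have "\<dots> = (\<Sum>m<N. (\<Sum>l<N. X i l * mat_pow N X k l m) * X m j)"
    using Suc by (intro sum.cong) (simp_all del: mat_pow.simps)
  also have "\<dots> = (\<Sum>l<N. X i l * (\<Sum>m<N. mat_pow N X k l m * X m j))"
    by (simp add: sum_distrib_left sum_distrib_right mult.assoc) (rule sum.swap)
  finally show ?case
    by (simp add: mat_mul_def)
qed

lemma abs_mat_pow_le:
  assumes "\<And>a b. a < N \<Longrightarrow> b < N \<Longrightarrow> \<bar>X a b\<bar> \<le> M" "0 \<le> M" "i < N" "j < N"
  shows "\<bar>mat_pow N X k i j\<bar> \<le> (real N * M) ^ k"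
  using assms(3,4)
proof (induction k arbitrary: j)
  case (Suc k)
  have "\<bar>mat_pow N X (Suc k) i j\<bar> \<le> (\<Sum>l<N. \<bar>mat_pow N X k i l\<bar> * \<bar>X l j\<bar>)"
    unfolding mat_pow.simps mat_mul_def abs_mult[symmetric] by (rule sum_abs)
  also have "\<dots> \<le> (\<Sum>l<N. (real N * M) ^ k * M)"
    using Suc assms by (intro sum_mono mult_mono) auto
  finally show ?case
    by (simp add: mult_ac)
qed simp

lemma mat_exp_scaled_eq_powser:
  "mat_exp N (\<lambda>a b. t * X a b) i j = (\<Sum>n. mat_pow N X n i j / fact n * t ^ n)"
  by (simp add: mat_exp_def mat_pow_scale mult.commute)

lemma summable_mat_exp_powser:
  assumes "i < N" "j < N"
  shows "summable (\<lambda>n. mat_pow N X n i j / fact n * t ^ n)"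
proof -
  define M where "M = (\<Sum>a<N. \<Sum>b<N. \<bar>X a b\<bar>)"
  have M: "\<bar>X a b\<bar> \<le> M" if "a < N" "b < N" for a b
    unfolding M_def using that
    by (intro order_trans[OF _ member_le_sum[of a]] member_le_sum[of b "{..<N}" "\<lambda>b. \<bar>X a b\<bar>"])
      (auto intro: sum_nonneg)
  have "norm (mat_pow N X n i j / fact n * t ^ n) \<le> (real N * M * \<bar>t\<bar>) ^ n / fact n" for n
  proof -
    have "\<bar>mat_pow N X n i j\<bar> * \<bar>t\<bar> ^ n \<le> (real N * M) ^ n * \<bar>t\<bar> ^ n"
      using abs_mat_pow_le[OF M _ assms] by (simp add: M_def mult_right_mono sum_nonneg)
    then show ?thesis
      by (simp add: abs_mult power_abs power_mult_distrib divide_right_mono)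
  qed
  moreover have "summable (\<lambda>n. (real N * M * \<bar>t\<bar>) ^ n / fact n)"
    using summable_exp[of "real N * M * \<bar>t\<bar>"] by (simp add: divide_inverse mult.commute)
  ultimately show ?thesis
    by (rule summable_comparison_test'[where N=0, rotated])
qed

lemma has_real_derivative_mat_exp:
  assumes "i < N" "j < N"
  shows "((\<lambda>t. mat_exp N (\<lambda>a b. t * X a b) i j) has_real_derivative
            (\<Sum>l<N. X i l * mat_exp N (\<lambda>a b. t * X a b) l j)) (at t)"
proof -
  let ?c = "\<lambda>i n. mat_pow N X n i j / fact n"
  have "diffs (?c i) n = mat_pow N X (Suc n) i j / fact n" for n
    by (simp add: diffs_def del: mat_pow.simps of_nat_Suc)
  then have "diffs (?c i) n * t ^ n = (\<Sum>l<N. X i l * (?c l n * t ^ n))" for n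
    by (simp add: mat_pow_Suc_left[OF assms] sum_distrib_left sum_divide_distrib
        mult_ac del: mat_pow.simps)
  then have "(\<Sum>n. diffs (?c i) n * t ^ n) = (\<Sum>n. \<Sum>l<N. X i l * (?c l n * t ^ n))"
    by presburger
  also have "\<dots> = (\<Sum>l<N. \<Sum>n. X i l * (?c l n * t ^ n))"
    using summable_mat_exp_powser[OF _ \<open>j < N\<close>] by (intro suminf_sum summable_mult) simp
  also have "\<dots> = (\<Sum>l<N. X i l * (\<Sum>n. ?c l n * t ^ n))"
    using summable_mat_exp_powser[OF _ \<open>j < N\<close>] by (intro sum.cong refl suminf_mult) simp
  finally have "(\<Sum>n. diffs (?c i) n * t ^ n) = (\<Sum>l<N. X i l * (\<Sum>n. ?c l n * t ^ n))" .
  moreover have "((\<lambda>t. \<Sum>n. ?c i n * t ^ n) has_real_derivative (\<Sum>n. diffs (?c i) n * t ^ n)) (at t)"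
    using summable_mat_exp_powser[OF assms] by (intro termdiffs_strong_converges_everywhere)
  ultimately show ?thesis
    by (simp add: mat_exp_scaled_eq_powser)
qed

lemma mat_exp_zero: "mat_exp N (\<lambda>_ _. 0) i j = (if i = j then 1 else 0)"
  using mat_exp_scaled_eq_powser[of N 0 "\<lambda>_ _. 0" i j] powser_zero[of "\<lambda>n. mat_pow N (\<lambda>_ _. 0) n i j / fact n"]
  by simp

section \<open>Comparison principle for cooperative linear systems\<close>

lemma real_induct_steps:
  fixes P :: "real \<Rightarrow> bool"
  assumes "0 < h" "P 0"
    and step: "\<And>a t. 0 \<le> a \<Longrightarrow> a \<le> t \<Longrightarrow> t - a \<le> h \<Longrightarrow> t \<le> \<tau> \<Longrightarrow> P a \<Longrightarrow> P t"
    and "t \<in> {0..\<tau>}"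
  shows "P t"
proof -
  have "P t" if "t \<in> {0..\<tau>}" "t \<le> real m * h" for m t
    using that
  proof (induction m arbitrary: t)
    case 0
    then show ?case using \<open>P 0\<close> by simp
  next
    case (Suc m)
    show ?case
    proof (cases "t \<le> real m * h")
      case True
      then show ?thesis using Suc by simp
    next
      case False
      then show ?thesis
        using Suc \<open>0 < h\<close> step[of "real m * h" t] by (simp add: algebra_simps)
    qed
  qed
  moreover obtain m where "t / h \<le> real m"
    using real_arch_simple by blast
  then have "t \<le> real m * h"
    using \<open>0 < h\<close> by (simp add: field_simps)
  ultimately show ?thesis
    using \<open>t \<in> {0..\<tau>}\<close> by blast
qed

lemma cooperative_system_lower_bound:
  fixes e e' :: "nat \<Rightarrow> real \<Rightarrow> real"
  assumes deriv: "\<And>i t. i < n \<Longrightarrow> t \<in> {a..b} \<Longrightarrow> (e i has_real_derivative e' i t) (at t within {a..b})"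
    and coop: "\<And>i t. i < n \<Longrightarrow> t \<in> {a..b} \<Longrightarrow> (\<Sum>j<n. c i j * e j t) \<le> e' i t"
    and c_nonneg: "\<And>i j. i < n \<Longrightarrow> j < n \<Longrightarrow> 0 \<le> c i j"
    and K: "0 \<le> K" "\<And>i. i < n \<Longrightarrow> (\<Sum>j<n. c i j) \<le> K"
    and e_ge: "\<And>i t. i < n \<Longrightarrow> t \<in> {a..b} \<Longrightarrow> - S \<le> e i t" and "0 \<le> S"
    and init: "\<And>i. i < n \<Longrightarrow> 0 \<le> e i a"
    and "i < n" "t \<in> {a..b}"
  shows "- ((b - a) * K * S) \<le> e i t"
proof -
  have e'_ge: "- (K * S) \<le> e' i s" if "i < n" "s \<in> {a..b}" for i s
  proof -
    have "- (K * S) \<le> - ((\<Sum>j<n. c i j) * S)"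
      using K(2)[OF that(1)] \<open>0 \<le> S\<close> by (simp add: mult_right_mono)
    also have "\<dots> = (\<Sum>j<n. c i j * - S)"
      by (simp add: sum_distrib_right sum_negf)
    also have "\<dots> \<le> (\<Sum>j<n. c i j * e j s)"
      using that c_nonneg e_ge by (intro sum_mono mult_left_mono) auto
    finally show ?thesis
      using coop[OF that] by simp
  qed
  have "e i a - K * S * (t - a) \<le> e i t"
  proof (rule DERIV_within_ge_imp_ge[where f'="e' i"])
    fix u assume "u \<in> {a..t}"
    then have "u \<in> {a..b}" "{a..t} \<subseteq> {a..b}"
      using \<open>t \<in> {a..b}\<close> by auto
    then show "(e i has_real_derivative e' i u) (at u within {a..t})" "- (K * S) \<le> e' i u"
      using DERIV_subset[OF deriv[OF \<open>i < n\<close>]] e'_ge[OF \<open>i < n\<close>] by auto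
  qed (use \<open>t \<in> {a..b}\<close> in auto)
  moreover have "K * S * (t - a) \<le> K * S * (b - a)"
    using \<open>t \<in> {a..b}\<close> K(1) \<open>0 \<le> S\<close> by (intro mult_left_mono) auto
  ultimately show ?thesis
    using init[OF \<open>i < n\<close>] by (simp add: algebra_simps)
qed

lemma cooperative_system_nonneg_step:
  fixes e e' :: "nat \<Rightarrow> real \<Rightarrow> real"
  assumes deriv: "\<And>i t. i < n \<Longrightarrow> t \<in> {a..b} \<Longrightarrow> (e i has_real_derivative e' i t) (at t within {a..b})"
    and coop: "\<And>i t. i < n \<Longrightarrow> t \<in> {a..b} \<Longrightarrow> (\<Sum>j<n. c i j * e j t) \<le> e' i t"
    and c_nonneg: "\<And>i j. i < n \<Longrightarrow> j < n \<Longrightarrow> 0 \<le> c i j"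
    and K: "0 \<le> K" "\<And>i. i < n \<Longrightarrow> (\<Sum>j<n. c i j) \<le> K"
    and "a \<le> b" and short: "real n * (b - a) * K \<le> 1 / 2"
    and init: "\<And>i. i < n \<Longrightarrow> 0 \<le> e i a"
    and "i < n" "t \<in> {a..b}"
  shows "0 \<le> e i t"
proof -
  text \<open>\<open>S\<close> is the largest total negative part on \<open>[a, b]\<close>; on a short interval the
    a priori bound forces \<open>S \<le> S / 2\<close>.\<close>
  define neg where "neg s = (\<Sum>i<n. max (- e i s) 0)" for s
  have "continuous_on {a..b} (e i)" if "i < n" for i
    using deriv[OF that] by (meson continuous_on_eq_continuous_within DERIV_continuous)
  then have neg_cont: "continuous_on {a..b} neg"
    unfolding neg_def by (intro continuous_on_sum continuous_on_max continuous_on_minus) auto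
  then obtain s0 where "s0 \<in> {a..b}" and s0_max: "\<And>s. s \<in> {a..b} \<Longrightarrow> neg s \<le> neg s0"
    using continuous_attains_sup[OF compact_Icc _ neg_cont] \<open>a \<le> b\<close> by auto
  define S where "S = neg s0"
  have "0 \<le> S"
    unfolding S_def neg_def by (intro sum_nonneg) auto
  have e_ge: "- S \<le> e i s" if "i < n" "s \<in> {a..b}" for i s
  proof -
    have "max (- e i s) 0 \<le> neg s"
      unfolding neg_def using that(1) by (intro member_le_sum) auto
    then show ?thesis
      using s0_max[OF that(2)] unfolding S_def by linarith
  qed
  have "max (- e i s0) 0 \<le> (b - a) * K * S" if "i < n" for i
    using cooperative_system_lower_bound[OF deriv coop c_nonneg K e_ge \<open>0 \<le> S\<close> init that \<open>s0 \<in> {a..b}\<close>]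
      K(1) \<open>0 \<le> S\<close> \<open>a \<le> b\<close> by simp
  then have "S \<le> (\<Sum>i<n. (b - a) * K * S)"
    unfolding S_def neg_def by (intro sum_mono) simp
  also have "\<dots> \<le> S / 2"
    using mult_right_mono[OF short \<open>0 \<le> S\<close>] by simp
  finally have "S = 0"
    using \<open>0 \<le> S\<close> by simp
  then show ?thesis
    using e_ge[OF \<open>i < n\<close> \<open>t \<in> {a..b}\<close>] by simp
qed

lemma cooperative_system_nonneg:
  fixes e e' :: "nat \<Rightarrow> real \<Rightarrow> real"
  assumes deriv: "\<And>i t. i < n \<Longrightarrow> t \<in> {0..\<tau>} \<Longrightarrow> (e i has_real_derivative e' i t) (at t within {0..\<tau>})"
    and coop: "\<And>i t. i < n \<Longrightarrow> t \<in> {0..\<tau>} \<Longrightarrow> (\<Sum>j<n. c i j * e j t) \<le> e' i t"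
    and c_nonneg: "\<And>i j. i < n \<Longrightarrow> j < n \<Longrightarrow> 0 \<le> c i j"
    and init: "\<And>i. i < n \<Longrightarrow> 0 \<le> e i 0"
  shows "\<And>i t. i < n \<Longrightarrow> t \<in> {0..\<tau>} \<Longrightarrow> 0 \<le> e i t"
proof -
  define K where "K = 1 + (\<Sum>i<n. \<Sum>j<n. c i j)"
  have K: "1 \<le> K" "\<And>i. i < n \<Longrightarrow> (\<Sum>j<n. c i j) \<le> K"
    unfolding K_def using c_nonneg
    by (auto intro!: sum_nonneg add_increasing member_le_sum[of _ "{..<n}" "\<lambda>i. \<Sum>j<n. c i j"]
        simp del: sum.lessThan_Suc)
  define h where "h = 1 / (2 * real (Suc n) * K)"
  have "0 < h"
    unfolding h_def using K(1) by simp
  have "real n * h * K = real n / (2 * real (Suc n))"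
    unfolding h_def using K(1) by simp
  also have "\<dots> \<le> 1 / 2"
    by (simp add: field_simps)
  finally have short: "real n * h * K \<le> 1 / 2" .
  have "\<forall>i<n. 0 \<le> e i t" if "t \<in> {0..\<tau>}" for t
  proof (rule real_induct_steps[OF \<open>0 < h\<close> _ _ that])
    fix a t assume a: "0 \<le> a" "a \<le> t" "t - a \<le> h" "t \<le> \<tau>" and "\<forall>i<n. 0 \<le> e i a"
    have sub: "{a..t} \<subseteq> {0..\<tau>}"
      using a by auto
    have "real n * (t - a) * K \<le> 1 / 2"
      using a(3) K(1) short
      by (meson order_trans mult_left_mono mult_right_mono of_nat_0_le_iff zero_le_one)
    show "\<forall>i<n. 0 \<le> e i t"
    proof (intro allI impI)
      fix i assume "i < n"
      show "0 \<le> e i t"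
      proof (rule cooperative_system_nonneg_step[where a=a and b=t and c=c and K=K and e=e and e'=e'])
        show "(e j has_real_derivative e' j s) (at s within {a..t})" if "j < n" "s \<in> {a..t}" for j s
        proof -
          have "s \<in> {0..\<tau>}"
            using that(2) sub by blast
          from DERIV_subset[OF deriv[OF that(1) this] sub] show ?thesis .
        qed
        show "(\<Sum>k<n. c j k * e k s) \<le> e' j s" if "j < n" "s \<in> {a..t}" for j s
          using coop that sub by blast
      qed (use K c_nonneg a \<open>i < n\<close> \<open>\<forall>i<n. 0 \<le> e i a\<close> \<open>real n * (t - a) * K \<le> 1 / 2\<close> in auto)
    qed
  qed (use init in simp)
  then show "\<And>i t. i < n \<Longrightarrow> t \<in> {0..\<tau>} \<Longrightarrow> 0 \<le> e i t"
    by blast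
qed

section \<open>The comparison system \<open>v' = A v\<close>\<close>

definition comparison_solution :: "(nat \<Rightarrow> real) \<Rightarrow> nat \<Rightarrow> (nat \<Rightarrow> real) \<Rightarrow> real \<Rightarrow> nat \<Rightarrow> real" where
  "comparison_solution \<delta> p w t i = (\<Sum>j\<le>p. mat_exp (p + 1) (\<lambda>a b. t * Amat \<delta> p a b) i j * w j)"

lemma Amat_row_shift:
  assumes "Suc i < p"
  shows "(\<Sum>l\<le>p. Amat \<delta> p i l * v l) = v (Suc i)"
proof -
  have "(\<lambda>l. Amat \<delta> p i l * v l) = (\<lambda>l. if l = Suc i then v l else 0)"
    using assms by (auto simp: Amat_def fun_eq_iff)
  then show ?thesis
    using assms by (simp only:) (simp add: sum.delta')
qed

lemma Amat_row_last:
  assumes "1 \<le> p"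
  shows "(\<Sum>l\<le>p. Amat \<delta> p (p - 1) l * v l) = (\<Sum>l<p. \<delta> l * v l) + v p"
proof -
  have "(\<Sum>l\<le>p. Amat \<delta> p (p - 1) l * v l) = (\<Sum>l<p. Amat \<delta> p (p - 1) l * v l) + Amat \<delta> p (p - 1) p * v p"
    by (simp add: lessThan_Suc_atMost[symmetric])
  also have "\<dots> = (\<Sum>l<p. \<delta> l * v l) + v p"
    using assms by (simp add: Amat_def)
  finally show ?thesis .
qed

lemma Amat_row_zero: "(\<Sum>l\<le>p. Amat \<delta> p p l * v l) = 0"
  by (simp add: Amat_def)

lemma has_real_derivative_comparison_solution:
  assumes "i \<le> p"
  shows "((\<lambda>t. comparison_solution \<delta> p w t i) has_real_derivative
           (\<Sum>l\<le>p. Amat \<delta> p i l * comparison_solution \<delta> p w t l)) (at t)"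
proof -
  have "((\<lambda>t. comparison_solution \<delta> p w t i) has_real_derivative
      (\<Sum>j\<le>p. (\<Sum>l\<le>p. Amat \<delta> p i l * mat_exp (p + 1) (\<lambda>a b. t * Amat \<delta> p a b) l j) * w j)) (at t)"
    unfolding comparison_solution_def using assms has_real_derivative_mat_exp[of i "p + 1" _ "Amat \<delta> p"]
    by (intro DERIV_sum DERIV_cmult_right) (simp add: lessThan_Suc_atMost)
  moreover have "(\<Sum>j\<le>p. (\<Sum>l\<le>p. Amat \<delta> p i l * mat_exp (p + 1) (\<lambda>a b. t * Amat \<delta> p a b) l j) * w j)
      = (\<Sum>l\<le>p. Amat \<delta> p i l * comparison_solution \<delta> p w t l)"
    unfolding comparison_solution_def
    by (simp only: sum_distrib_left sum_distrib_right mult.assoc) (rule sum.swap)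
  ultimately show ?thesis
    by simp
qed

lemma comparison_solution_0:
  assumes "i \<le> p"
  shows "comparison_solution \<delta> p w 0 i = w i"
proof -
  have "(\<lambda>j. mat_exp (p + 1) (\<lambda>a b. 0 * Amat \<delta> p a b) i j * w j) = (\<lambda>j. if j = i then w j else 0)"
    by (auto simp: fun_eq_iff mat_exp_zero)
  then show ?thesis
    using assms unfolding comparison_solution_def by (simp only:) (simp add: sum.delta')
qed

lemma comparison_solution_last: "comparison_solution \<delta> p w t p = w p"
proof -
  have "((\<lambda>t. comparison_solution \<delta> p w t p) has_real_derivative 0) (at s)" for s
    using has_real_derivative_comparison_solution[of p p \<delta> w s] by (simp add: Amat_row_zero)
  then have "comparison_solution \<delta> p w t p = comparison_solution \<delta> p w 0 p"
    by (intro DERIV_isconst_all allI)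
  then show ?thesis
    by (simp add: comparison_solution_0)
qed

lemma comparison_solution_ge_subsolution:
  fixes g g' :: "nat \<Rightarrow> real \<Rightarrow> real"
  assumes deriv: "\<And>i t. i < p \<Longrightarrow> t \<in> {0..\<tau>} \<Longrightarrow> (g i has_real_derivative g' i t) (at t within {0..\<tau>})"
    and shift: "\<And>i t. Suc i < p \<Longrightarrow> t \<in> {0..\<tau>} \<Longrightarrow> g' i t = g (Suc i) t"
    and top: "\<And>t. t \<in> {0..\<tau>} \<Longrightarrow> g' (p - 1) t \<le> (\<Sum>j<p. \<delta> j * g j t) + w p"
    and \<delta>_nonneg: "\<And>j. j < p \<Longrightarrow> 0 \<le> \<delta> j"
    and init: "\<And>i. i < p \<Longrightarrow> g i 0 \<le> w i"
    and "i < p" "t \<in> {0..\<tau>}"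
  shows "g i t \<le> comparison_solution \<delta> p w t i"
proof -
  let ?v = "comparison_solution \<delta> p w"
  text \<open>The differences \<open>v\<^sub>i - g\<^sub>i\<close> satisfy a cooperative differential inequality whose
    coefficients are the upper left \<open>p \<times> p\<close> block of \<open>A\<close>.\<close>
  define c where "c i j = (if Suc i < p then (if j = Suc i then 1 else 0) else \<delta> j)" for i j :: nat
  have "\<And>i t. i < p \<Longrightarrow> t \<in> {0..\<tau>} \<Longrightarrow> 0 \<le> ?v t i - g i t"
  proof (rule cooperative_system_nonneg[where c=c and e="\<lambda>i t. ?v t i - g i t" and e'="\<lambda>i t. (\<Sum>l\<le>p. Amat \<delta> p i l * ?v t l) - g' i t"])
    show "((\<lambda>t. ?v t i - g i t) has_real_derivative (\<Sum>l\<le>p. Amat \<delta> p i l * ?v t l) - g' i t)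
        (at t within {0..\<tau>})" if "i < p" "t \<in> {0..\<tau>}" for i t
      using that
      by (intro DERIV_diff has_field_derivative_at_within[OF has_real_derivative_comparison_solution] deriv)
        auto
    show "(\<Sum>j<p. c i j * (?v t j - g j t)) \<le> (\<Sum>l\<le>p. Amat \<delta> p i l * ?v t l) - g' i t"
      if "i < p" "t \<in> {0..\<tau>}" for i t
    proof (cases "Suc i < p")
      case True
      then have "(\<lambda>j. c i j * (?v t j - g j t)) = (\<lambda>j. if j = Suc i then ?v t j - g j t else 0)"
        by (auto simp: c_def fun_eq_iff)
      then show ?thesis
        using True that by (simp only:) (simp add: sum.delta' Amat_row_shift shift)
    next
      case False
      then have "i = p - 1" "1 \<le> p"
        using that by auto
      moreover have "(\<Sum>j<p. c (p - 1) j * (?v t j - g j t)) = (\<Sum>j<p. \<delta> j * ?v t j) - (\<Sum>j<p. \<delta> j * g j t)"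
        using \<open>1 \<le> p\<close> by (simp add: c_def sum_subtractf right_diff_distrib)
      ultimately show ?thesis
        using top[OF that(2)] Amat_row_last[OF \<open>1 \<le> p\<close>, of \<delta> "?v t"]
        by (simp add: comparison_solution_last)
    qed
    show "0 \<le> c i j" if "i < p" "j < p" for i j
      using \<delta>_nonneg that by (simp add: c_def)
    show "0 \<le> ?v 0 i - g i 0" if "i < p" for i
      using init[OF that] that by (simp add: comparison_solution_0)
  qed
  from this[OF assms(6,7)] show ?thesis
    by simp
qed

lemma has_real_derivative_power_div_fact:
  "((\<lambda>t. t ^ Suc m / fact (Suc m)) has_real_derivative s ^ m / fact m) (at s within S)"
proof -
  have "((\<lambda>t. t ^ Suc m / fact (Suc m)) has_real_derivative real (Suc m) * s ^ m / fact (Suc m)) (at s within S)"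
    using DERIV_pow[of "Suc m" s S] by (intro DERIV_cdivide) simp
  then show ?thesis
    by (simp del: of_nat_Suc)
qed

lemma comparison_solution_lower_bound:
  assumes "1 \<le> p" and \<delta>_nonneg: "\<And>j. j < p \<Longrightarrow> 0 \<le> \<delta> j"
    and w_nonneg: "\<And>i. 0 < i \<Longrightarrow> i < p \<Longrightarrow> 0 \<le> w i"
    and "0 \<le> \<epsilon>" and \<epsilon>_le: "\<epsilon> \<le> \<delta> 0 * w 0 + w p"
    and "0 \<le> t" "i < p"
  shows "(if i = 0 then w 0 else 0) + \<epsilon> * t ^ (p - i) / fact (p - i) \<le> comparison_solution \<delta> p w t i"
proof (rule comparison_solution_ge_subsolution[where \<tau>=t and
      g="\<lambda>i t. (if i = 0 then w 0 else 0) + \<epsilon> * t ^ (p - i) / fact (p - i)" and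
      g'="\<lambda>i t. \<epsilon> * t ^ (p - i - 1) / fact (p - i - 1)"])
  show "((\<lambda>t. (if i = 0 then w 0 else 0) + \<epsilon> * t ^ (p - i) / fact (p - i)) has_real_derivative
      \<epsilon> * s ^ (p - i - 1) / fact (p - i - 1)) (at s within {0..t})" if "i < p" for i s
  proof -
    obtain m where m: "p - i = Suc m"
      using \<open>i < p\<close> by (metis Suc_diff_Suc)
    have "((\<lambda>t. (if i = 0 then w 0 else 0) + \<epsilon> * (t ^ Suc m / fact (Suc m))) has_real_derivative
        0 + \<epsilon> * (s ^ m / fact m)) (at s within {0..t})"
      by (intro DERIV_add DERIV_const DERIV_cmult has_real_derivative_power_div_fact)
    then show ?thesis
      by (simp add: m)
  qed
  show "\<epsilon> * s ^ (p - i - 1) / fact (p - i - 1)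
      = (if Suc i = 0 then w 0 else 0) + \<epsilon> * s ^ (p - Suc i) / fact (p - Suc i)" for i s
    by simp
  show "\<epsilon> * s ^ (p - (p - 1) - 1) / fact (p - (p - 1) - 1)
      \<le> (\<Sum>j<p. \<delta> j * ((if j = 0 then w 0 else 0) + \<epsilon> * s ^ (p - j) / fact (p - j))) + w p"
    if "s \<in> {0..t}" for s
  proof -
    have "(\<lambda>j. \<delta> j * ((if j = 0 then w 0 else 0) + \<epsilon> * s ^ (p - j) / fact (p - j)))
        = (\<lambda>j. (if j = 0 then \<delta> 0 * w 0 else 0) + \<delta> j * (\<epsilon> * s ^ (p - j) / fact (p - j)))"
      by (auto simp: fun_eq_iff distrib_left)
    then have "(\<Sum>j<p. \<delta> j * ((if j = 0 then w 0 else 0) + \<epsilon> * s ^ (p - j) / fact (p - j)))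
        = \<delta> 0 * w 0 + (\<Sum>j<p. \<delta> j * (\<epsilon> * s ^ (p - j) / fact (p - j)))"
      using \<open>1 \<le> p\<close> by (simp only:) (simp add: sum.distrib)
    moreover have "0 \<le> (\<Sum>j<p. \<delta> j * (\<epsilon> * s ^ (p - j) / fact (p - j)))"
      using \<delta>_nonneg \<open>0 \<le> \<epsilon>\<close> that by (intro sum_nonneg mult_nonneg_nonneg divide_nonneg_pos) auto
    ultimately show ?thesis
      using \<open>1 \<le> p\<close> \<epsilon>_le by simp
  qed
  show "(if i = 0 then w 0 else 0) + \<epsilon> * 0 ^ (p - i) / fact (p - i) \<le> w i" if "i < p" for i
    using w_nonneg[of i] that by (simp add: zero_power)
qed (use \<delta>_nonneg \<open>0 \<le> t\<close> \<open>i < p\<close> in auto)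

lemma continuous_on_comparison_solution:
  assumes "i \<le> p"
  shows "continuous_on S (\<lambda>t. comparison_solution \<delta> p w t i)"
  using DERIV_continuous[OF has_real_derivative_comparison_solution[OF assms]]
  by (intro continuous_at_imp_continuous_on ballI)

lemma comparison_solution_strict_mono:
  assumes "1 \<le> p" and \<delta>_nonneg: "\<And>j. j < p \<Longrightarrow> 0 \<le> \<delta> j"
    and w_nonneg: "\<And>i. 0 < i \<Longrightarrow> i < p \<Longrightarrow> 0 \<le> w i"
    and "0 < \<epsilon>" and \<epsilon>_le: "\<epsilon> \<le> \<delta> 0 * w 0 + w p"
    and "0 \<le> a" "a < b"
  shows "comparison_solution \<delta> p w a 0 < comparison_solution \<delta> p w b 0"
proof (rule DERIV_pos_imp_increasing_open[OF \<open>a < b\<close> _ continuous_on_comparison_solution])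
  let ?v = "comparison_solution \<delta> p w"
  note lower = comparison_solution_lower_bound[where p=p and \<delta>=\<delta> and w=w and \<epsilon>=\<epsilon>,
      OF \<open>1 \<le> p\<close> \<delta>_nonneg w_nonneg less_imp_le[OF \<open>0 < \<epsilon>\<close>] \<epsilon>_le]
  fix x assume "a < x" "x < b"
  then have "0 < x"
    using \<open>0 \<le> a\<close> by simp
  have "0 < (\<Sum>l\<le>p. Amat \<delta> p 0 l * ?v x l)"
  proof (cases "1 < p")
    case True
    have "0 < \<epsilon> * x ^ (p - 1) / fact (p - 1)"
      using \<open>0 < \<epsilon>\<close> \<open>0 < x\<close> by simp
    also have "\<dots> \<le> ?v x 1"
      using lower[of x 1] True \<open>0 < x\<close> by simp
    finally show ?thesis
      using Amat_row_shift[of 0 p \<delta> "?v x"] True by simp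
  next
    case False
    then have "p = 1"
      using \<open>1 \<le> p\<close> by simp
    have "0 \<le> \<epsilon> * x ^ p / fact p"
      using \<open>0 < x\<close> \<open>0 < \<epsilon>\<close> by simp
    then have "w 0 \<le> ?v x 0"
      using lower[of x 0] \<open>0 < x\<close> \<open>1 \<le> p\<close> by simp
    then have "\<delta> 0 * w 0 \<le> \<delta> 0 * ?v x 0"
      using \<delta>_nonneg[of 0] \<open>1 \<le> p\<close> by (simp add: mult_left_mono)
    then have "\<epsilon> \<le> \<delta> 0 * ?v x 0 + w p"
      using \<epsilon>_le by linarith
    then show ?thesis
      using Amat_row_last[OF \<open>1 \<le> p\<close>, of \<delta> "?v x"] \<open>p = 1\<close> \<open>0 < \<epsilon>\<close>
      by (simp add: comparison_solution_last)
  qed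
  then show "\<exists>y. ((\<lambda>t. ?v t 0) has_real_derivative y) (at x) \<and> 0 < y"
    using has_real_derivative_comparison_solution[of 0 p] by blast
qed simp

lemma comparison_solution_unique_root:
  assumes "1 \<le> p" and \<delta>_nonneg: "\<And>j. j < p \<Longrightarrow> 0 \<le> \<delta> j"
    and w_nonneg: "\<And>i. 0 < i \<Longrightarrow> i < p \<Longrightarrow> 0 \<le> w i"
    and "0 < \<epsilon>" and \<epsilon>_le: "\<epsilon> \<le> \<delta> 0 * w 0 + w p" and "w 0 < 0"
  shows "\<exists>!t. 0 \<le> t \<and> comparison_solution \<delta> p w t 0 = 0"
proof -
  let ?v = "comparison_solution \<delta> p w"
  note mono = comparison_solution_strict_mono[where p=p and \<delta>=\<delta> and w=w and \<epsilon>=\<epsilon>,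
      OF \<open>1 \<le> p\<close> \<delta>_nonneg w_nonneg \<open>0 < \<epsilon>\<close> \<epsilon>_le]
  define T where "T = max 1 (- w 0 * fact p / \<epsilon>)"
  have "1 \<le> T"
    by (simp add: T_def)
  have "- w 0 * fact p / \<epsilon> \<le> T"
    by (simp add: T_def)
  then have "- w 0 * fact p \<le> T * \<epsilon>"
    using \<open>0 < \<epsilon>\<close> by (simp only: pos_divide_le_eq)
  then have "- w 0 \<le> \<epsilon> * T / fact p"
    by (simp add: pos_le_divide_eq mult.commute)
  also have "\<dots> \<le> \<epsilon> * T ^ p / fact p"
    using \<open>1 \<le> T\<close> \<open>1 \<le> p\<close> \<open>0 < \<epsilon>\<close> power_increasing[of 1 p T]
    by (intro divide_right_mono mult_left_mono) auto
  also have "w 0 + \<epsilon> * T ^ p / fact p \<le> ?v T 0"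
    using comparison_solution_lower_bound[where p=p and \<delta>=\<delta> and w=w and \<epsilon>=\<epsilon>,
        OF \<open>1 \<le> p\<close> \<delta>_nonneg w_nonneg _ \<epsilon>_le, of T 0] \<open>1 \<le> T\<close> \<open>1 \<le> p\<close> \<open>0 < \<epsilon>\<close>
    by simp
  finally have "0 \<le> ?v T 0"
    by simp
  moreover have "?v 0 0 \<le> 0"
    using \<open>w 0 < 0\<close> by (simp add: comparison_solution_0)
  ultimately obtain t where "0 \<le> t" "?v t 0 = 0"
    using IVT'[of "\<lambda>t. ?v t 0" 0 0 T] continuous_on_comparison_solution[of 0 p] \<open>1 \<le> T\<close> by auto
  moreover have "s = t" if "0 \<le> s" "?v s 0 = 0" "0 \<le> t" "?v t 0 = 0" for s t
    using mono[of s t] mono[of t s] that by (cases s t rule: linorder_cases) auto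
  ultimately show ?thesis
    by blast
qed

section \<open>Homogeneous flows, triggering times and the bound \<open>mu\<close>\<close>

lemma homogeneous_ode_solution_scaleR:
  fixes F :: "'a::euclidean_space \<Rightarrow> 'a"
  assumes F: "Ck (Suc 0) F" and hom: "\<And>z. F (s *\<^sub>R z) = s powr (\<alpha> + 1) *\<^sub>R F z"
    and "0 < s" "0 \<le> t"
    and x: "\<And>u. u \<in> {0..t} \<Longrightarrow> (x has_vector_derivative F (x u)) (at u within {0..t})"
    and y: "\<And>u. u \<in> {0..s powr \<alpha> * t} \<Longrightarrow>
              (y has_vector_derivative F (y u)) (at u within {0..s powr \<alpha> * t})"
    and start: "x 0 = s *\<^sub>R y 0"
  shows "x t = s *\<^sub>R y (s powr \<alpha> * t)"
proof (rule ode_solution_unique_C1[where y="\<lambda>u. s *\<^sub>R y (s powr \<alpha> * u)", OF F \<open>0 \<le> t\<close> x])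
  let ?\<sigma> = "s powr \<alpha>"
  show "x 0 = s *\<^sub>R y (?\<sigma> * 0)"
    using start by simp
  fix u assume u: "u \<in> {0..t}"
  have "((\<lambda>u. ?\<sigma> * u) has_vector_derivative ?\<sigma>) (at u within {0..t})"
    using has_real_derivative_iff_has_vector_derivative[THEN iffD1, OF DERIV_cmult_Id] by blast
  moreover have "(y has_vector_derivative F (y (?\<sigma> * u))) (at (?\<sigma> * u) within (\<lambda>u. ?\<sigma> * u) ` {0..t})"
    using u \<open>0 < s\<close>
    by (intro has_vector_derivative_within_subset[OF y]) (auto intro: mult_left_mono)
  ultimately have "((y \<circ> (\<lambda>u. ?\<sigma> * u)) has_vector_derivative ?\<sigma> *\<^sub>R F (y (?\<sigma> * u))) (at u within {0..t})"
    by (rule vector_diff_chain_within)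
  then have "((\<lambda>u. s *\<^sub>R y (?\<sigma> * u)) has_vector_derivative s *\<^sub>R (?\<sigma> *\<^sub>R F (y (?\<sigma> * u))))
      (at u within {0..t})"
    unfolding o_def by (rule bounded_linear.has_vector_derivative[OF bounded_linear_scaleR_right])
  moreover have "s *\<^sub>R (?\<sigma> *\<^sub>R F (y (?\<sigma> * u))) = F (s *\<^sub>R y (?\<sigma> * u))"
    using \<open>0 < s\<close> by (simp add: hom powr_add)
  ultimately show "((\<lambda>u. s *\<^sub>R y (?\<sigma> * u)) has_vector_derivative F (s *\<^sub>R y (?\<sigma> * u))) (at u within {0..t})"
    by simp
qed

lemma first_zero_of_negative_start:
  fixes k :: "real \<Rightarrow> real"
  assumes cont: "continuous_on {0..b} k" and "k 0 < 0" "k b = 0" "0 \<le> b"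
  obtains \<tau> where "0 < \<tau>" "\<tau> \<le> b" "k \<tau> = 0" "\<And>t. 0 \<le> t \<Longrightarrow> t < \<tau> \<Longrightarrow> k t < 0"
proof -
  define C where "C = {t \<in> {0..b}. k t = 0}"
  have "closed C"
    unfolding C_def by (rule continuous_closed_preimage_constant[OF cont closed_atLeastAtMost])
  moreover have "b \<in> C" "bdd_below C"
    using assms unfolding C_def by (auto intro: bdd_belowI[of _ 0])
  ultimately have "Inf C \<in> C" "Inf C \<le> b"
    by (auto intro: closed_contains_Inf cInf_lower)
  moreover have "k t < 0" if "0 \<le> t" "t < Inf C" for t
  proof (rule ccontr)
    assume "\<not> k t < 0"
    moreover have "continuous_on {0..t} k"
      using cont that \<open>Inf C \<le> b\<close> by (auto intro: continuous_on_subset)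
    ultimately have "\<exists>s\<ge>0. s \<le> t \<and> k s = 0"
      using IVT'[of k 0 0 t] \<open>k 0 < 0\<close> that(1) by simp
    then obtain s where "0 \<le> s" "s \<le> t" "k s = 0"
      by blast
    then have "s \<in> C"
      using that \<open>Inf C \<le> b\<close> unfolding C_def by auto
    then show False
      using cInf_lower[OF _ \<open>bdd_below C\<close>, of s] \<open>s \<le> t\<close> \<open>t < Inf C\<close> by linarith
  qed
  moreover have "Inf C \<noteq> 0"
    using \<open>Inf C \<in> C\<close> \<open>k 0 < 0\<close> unfolding C_def by auto
  ultimately show ?thesis
    using that[of "Inf C"] unfolding C_def by force
qed

lemma ereal_le_less_trans: "t \<le> b \<Longrightarrow> ereal b < X \<Longrightarrow> ereal t < X"
  by (meson ereal_less_eq(3) le_less_trans)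

locale homogeneous_triggering =
  fixes F :: "(real^'n) \<times> (real^'n) \<Rightarrow> (real^'n) \<times> (real^'n)"
    and phi :: "(real^'n) \<times> (real^'n) \<Rightarrow> real"
    and \<alpha> \<theta> :: real
    and xi :: "real^'n \<Rightarrow> real \<Rightarrow> (real^'n) \<times> (real^'n)"
    and T :: "real^'n \<Rightarrow> ereal"
  assumes F_smooth: "smooth_fun F"
    and F_hom: "\<And>c z. c > 0 \<Longrightarrow> F (c *\<^sub>R z) = c powr (\<alpha> + 1) *\<^sub>R F z"
    and phi_smooth: "smooth_fun phi"
    and phi_hom: "\<And>c z. c > 0 \<Longrightarrow> phi (c *\<^sub>R z) = c powr (\<theta> + 1) * phi z"
    and xi_init: "\<And>x. xi x 0 = (x, 0)"
    and xi_ode: "\<And>x t. 0 \<le> t \<Longrightarrow> ereal t < T x \<Longrightarrow>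
                   (xi x has_vector_derivative F (xi x t)) (at t within {0..})"
    and phi_neg: "\<And>x. x \<noteq> 0 \<Longrightarrow> phi (x, 0) < 0"
    and phi_zero: "\<And>x. x \<noteq> 0 \<Longrightarrow> \<exists>tx>0. ereal tx < T x \<and> phi (xi x tx) = 0"
begin

lemma xi_solution_on:
  assumes "ereal b < T x" "u \<in> {0..b}"
  shows "(xi x has_vector_derivative F (xi x u)) (at u within {0..b})"
  using assms ereal_le_less_trans[of u b "T x"]
  by (intro has_vector_derivative_within_subset[OF xi_ode]) auto

lemma continuous_on_xi: "ereal b < T x \<Longrightarrow> continuous_on {0..b} (xi x)"
  using xi_solution_on
  by (meson continuous_on_eq_continuous_within has_vector_derivative_continuous)

lemma continuous_on_phi: "continuous_on S phi"
  using phi_smooth continuous_on_subset[of UNIV phi S] unfolding smooth_fun_def by (metis Ck.simps(1) subset_UNIV)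

lemma tau_ev_first_zero:
  assumes "x \<noteq> 0"
  shows "0 < tau_ev xi T phi x" and "ereal (tau_ev xi T phi x) < T x"
    and "phi (xi x (tau_ev xi T phi x)) = 0"
    and "\<And>t. 0 \<le> t \<Longrightarrow> t < tau_ev xi T phi x \<Longrightarrow> phi (xi x t) < 0"
proof -
  obtain tx where tx: "0 < tx" "ereal tx < T x" "phi (xi x tx) = 0"
    using phi_zero[OF assms] by blast
  have "continuous_on {0..tx} (\<lambda>t. phi (xi x t))"
    using continuous_on_compose2[OF continuous_on_phi[of UNIV] continuous_on_xi[OF tx(2)]] by simp
  moreover have "phi (xi x 0) < 0"
    using phi_neg[OF assms] by (simp add: xi_init)
  ultimately obtain \<tau> where \<tau>: "0 < \<tau>" "\<tau> \<le> tx" "phi (xi x \<tau>) = 0"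
    and before: "\<And>t. 0 \<le> t \<Longrightarrow> t < \<tau> \<Longrightarrow> phi (xi x t) < 0"
    using first_zero_of_negative_start[of tx "\<lambda>t. phi (xi x t)"] tx by auto
  have "ereal \<tau> < T x"
    using ereal_le_less_trans[OF \<tau>(2) tx(2)] .
  have "tau_ev xi T phi x = \<tau>"
    unfolding tau_ev_def
  proof (rule cInf_eq_minimum)
    show "\<tau> \<in> {t. 0 < t \<and> ereal t < T x \<and> phi (xi x t) = 0}"
      using \<tau> \<open>ereal \<tau> < T x\<close> by simp
    show "\<tau> \<le> t" if "t \<in> {t. 0 < t \<and> ereal t < T x \<and> phi (xi x t) = 0}" for t
      using before[of t] that by force
  qed
  then show "0 < tau_ev xi T phi x" "ereal (tau_ev xi T phi x) < T x"
    "phi (xi x (tau_ev xi T phi x)) = 0" "\<And>t. 0 \<le> t \<Longrightarrow> t < tau_ev xi T phi x \<Longrightarrow> phi (xi x t) < 0"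
    using \<tau> \<open>ereal \<tau> < T x\<close> before by simp_all
qed

lemma phi_xi_nonpos_until_tau_ev:
  assumes "x \<noteq> 0" "0 \<le> t" "t \<le> tau_ev xi T phi x"
  shows "phi (xi x t) \<le> 0"
  using tau_ev_first_zero[OF assms(1)] assms(2,3) by (cases "t = tau_ev xi T phi x") force+

lemma xi_scaleR:
  assumes "0 < s" "0 \<le> t" "ereal t < T (s *\<^sub>R y)" "ereal (s powr \<alpha> * t) < T y"
  shows "xi (s *\<^sub>R y) t = s *\<^sub>R xi y (s powr \<alpha> * t)"
proof (rule homogeneous_ode_solution_scaleR[where F=F])
  show "Ck (Suc 0) F"
    using F_smooth unfolding smooth_fun_def by blast
qed (use assms in \<open>auto simp: F_hom xi_init intro: xi_solution_on\<close>)

lemma tau_ev_scaleR_le: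
  assumes "0 < s" "y \<noteq> 0"
  shows "s powr \<alpha> * tau_ev xi T phi (s *\<^sub>R y) \<le> tau_ev xi T phi y"
proof (rule ccontr)
  let ?\<sigma> = "s powr \<alpha>" and ?\<tau>x = "tau_ev xi T phi (s *\<^sub>R y)" and ?\<tau>y = "tau_ev xi T phi y"
  assume "\<not> ?\<sigma> * ?\<tau>x \<le> ?\<tau>y"
  then have m_less: "?\<tau>y / ?\<sigma> < ?\<tau>x"
    using \<open>0 < s\<close> by (simp add: field_simps)
  have "s *\<^sub>R y \<noteq> 0"
    using assms by simp
  note tx = tau_ev_first_zero[OF this] and ty = tau_ev_first_zero[OF \<open>y \<noteq> 0\<close>]
  have "0 \<le> ?\<tau>y / ?\<sigma>"
    using ty(1) by simp
  moreover have "ereal (?\<tau>y / ?\<sigma>) < T (s *\<^sub>R y)"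
    using ereal_le_less_trans[OF less_imp_le[OF m_less] tx(2)] .
  moreover have "?\<sigma> * (?\<tau>y / ?\<sigma>) = ?\<tau>y"
    using \<open>0 < s\<close> by simp
  ultimately have "xi (s *\<^sub>R y) (?\<tau>y / ?\<sigma>) = s *\<^sub>R xi y ?\<tau>y"
    using xi_scaleR[OF \<open>0 < s\<close>, of "?\<tau>y / ?\<sigma>" y] ty(2) by simp
  then have "phi (xi (s *\<^sub>R y) (?\<tau>y / ?\<sigma>)) = 0"
    using phi_hom[OF \<open>0 < s\<close>] ty(3) by simp
  moreover have "phi (xi (s *\<^sub>R y) (?\<tau>y / ?\<sigma>)) < 0"
    using tx(4)[OF \<open>0 \<le> ?\<tau>y / ?\<sigma>\<close> m_less] .
  ultimately show False
    by simp
qed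

lemma has_real_derivative_lie_along_xi:
  assumes "ereal b < T y" "u \<in> {0..b}"
  shows "((\<lambda>t. lie F phi i (xi y t)) has_real_derivative lie F phi (Suc i) (xi y u)) (at u within {0..b})"
proof -
  have "(lie F phi i has_derivative frechet_derivative (lie F phi i) (at (xi y u)))
      (at (xi y u) within xi y ` {0..b})"
    using lie_differentiable[OF F_smooth phi_smooth] frechet_derivative_works has_derivative_at_withinI
    by blast
  from vector_derivative_diff_chain_within[OF xi_solution_on[OF assms] this]
  show ?thesis
    unfolding has_real_derivative_iff_has_vector_derivative o_def by simp
qed

lemma phi_xi_le_comparison_solution:
  assumes "1 \<le> p" "ereal \<tau> < T y"
    and lie_bound: "\<And>t. t \<in> {0..\<tau>} \<Longrightarrow> lie F phi p (xi y t) \<le> (\<Sum>i<p. \<delta> i * lie F phi i (xi y t)) + w p"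
    and "\<And>j. j < p \<Longrightarrow> 0 \<le> \<delta> j" and "\<And>i. i < p \<Longrightarrow> lie F phi i (y, 0) \<le> w i"
    and "t \<in> {0..\<tau>}"
  shows "phi (xi y t) \<le> comparison_solution \<delta> p w t 0"
proof -
  have "lie F phi 0 (xi y t) \<le> comparison_solution \<delta> p w t 0"
  proof (rule comparison_solution_ge_subsolution[where g="\<lambda>i t. lie F phi i (xi y t)"
        and g'="\<lambda>i t. lie F phi (Suc i) (xi y t)"])
    show "lie F phi (Suc (p - 1)) (xi y s) \<le> (\<Sum>j<p. \<delta> j * lie F phi j (xi y s)) + w p"
      if "s \<in> {0..\<tau>}" for s
      using lie_bound[OF that] \<open>1 \<le> p\<close> by simp
    show "((\<lambda>t. lie F phi i (xi y t)) has_real_derivative lie F phi (Suc i) (xi y s)) (at s within {0..\<tau>})"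
      if "s \<in> {0..\<tau>}" for i s
      using has_real_derivative_lie_along_xi[OF \<open>ereal \<tau> < T y\<close> that] .
  qed (use assms in \<open>auto simp: xi_init\<close>)
  then show ?thesis
    by simp
qed

end

lemma mu_eq_comparison_solution:
  "mu F phi \<alpha> \<theta> \<delta> p r x t
     = (norm x / r) powr (\<theta> + 1) * comparison_solution \<delta> p (w0 F phi \<delta> p r x) ((norm x / r) powr \<alpha> * t) 0"
  by (simp add: mu_def comparison_solution_def Let_def)

lemma w0_scaleR:
  assumes "0 < c"
  shows "w0 F phi \<delta> p r (c *\<^sub>R x) = w0 F phi \<delta> p r x"
proof -
  have "(r / norm (c *\<^sub>R x)) *\<^sub>R (c *\<^sub>R x) = (r / norm x) *\<^sub>R x"
    using assms by (cases "x = 0") auto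
  then show ?thesis
    unfolding w0_def by (simp only:)
qed

lemma mu_scaleR:
  assumes "0 < c" "0 < r"
  shows "mu F phi \<alpha> \<theta> \<delta> p r (c *\<^sub>R x) t = c powr (\<theta> + 1) * mu F phi \<alpha> \<theta> \<delta> p r x (c powr \<alpha> * t)"
proof -
  have "norm (c *\<^sub>R x) / r = c * (norm x / r)"
    using assms by simp
  moreover have "(c * (norm x / r)) powr q = c powr q * (norm x / r) powr q" for q
    by (rule powr_mult)
  ultimately show ?thesis
    by (simp only: mu_eq_comparison_solution w0_scaleR[OF assms(1)] mult.assoc mult.left_commute)
qed

lemma w0_0: "w0 F phi \<delta> p r x 0 = phi ((r / norm x) *\<^sub>R x, 0)"
  by (simp add: w0_def)

lemma w0_nonneg: "0 < i \<Longrightarrow> i < p \<Longrightarrow> 0 \<le> w0 F phi \<delta> p r x i"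
  by (simp add: w0_def)

lemma w0_last: "1 \<le> p \<Longrightarrow> w0 F phi \<delta> p r x p = \<delta> p"
  by (simp add: w0_def)

locale triggering_bound = homogeneous_triggering F phi \<alpha> \<theta> xi T
  for F :: "(real^'n) \<times> (real^'n) \<Rightarrow> (real^'n) \<times> (real^'n)" and phi \<alpha> \<theta> xi T +
  fixes Z :: "(real^'n) set" and \<Xi> :: "((real^'n) \<times> (real^'n)) set"
    and d \<epsilon> r :: real and p :: nat and \<delta> :: "nat \<Rightarrow> real"
  assumes inv: "\<And>x t. x \<in> Z \<Longrightarrow> 0 \<le> t \<Longrightarrow> ereal t < T x \<Longrightarrow> phi (xi x t) \<le> 0 \<Longrightarrow> xi x t \<in> \<Xi>"
    and \<Xi>_sub: "\<Xi> \<subseteq> ball 0 d"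
    and p_ge: "p \<ge> 1" and \<epsilon>_pos: "\<epsilon> > 0"
    and h1: "\<And>z. z \<in> ball 0 d \<Longrightarrow> lie F phi p z \<le> (\<Sum>i<p. \<delta> i * lie F phi i z) + \<delta> p"
    and h2: "\<And>x. x \<in> Z \<Longrightarrow> \<delta> 0 * phi (x, 0) + \<delta> p \<ge> \<epsilon>"
    and h3: "\<And>i. i \<le> p \<Longrightarrow> \<delta> i \<ge> 0"
    and r_pos: "r > 0" and D_sub: "sphere 0 r \<subseteq> Z"
begin

lemma projection_to_sphere:
  assumes "x \<noteq> 0"
  shows "0 < norm x / r" and "norm ((r / norm x) *\<^sub>R x) = r" and "(norm x / r) *\<^sub>R ((r / norm x) *\<^sub>R x) = x"
  using assms r_pos by auto

lemma projection_to_sphere_in_Z: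
  assumes "x \<noteq> 0"
  shows "(r / norm x) *\<^sub>R x \<in> Z"
proof -
  have "(r / norm x) *\<^sub>R x \<in> sphere 0 r"
    unfolding mem_sphere_0 by (rule projection_to_sphere(2)[OF assms])
  then show ?thesis
    using D_sub by blast
qed

lemma \<epsilon>_le_w0:
  assumes "x \<noteq> 0"
  shows "\<epsilon> \<le> \<delta> 0 * w0 F phi \<delta> p r x 0 + w0 F phi \<delta> p r x p"
  using h2[OF projection_to_sphere_in_Z[OF assms]] by (simp add: w0_0 w0_last[OF p_ge])

lemma mu_0_neg:
  assumes "x \<noteq> 0"
  shows "mu F phi \<alpha> \<theta> \<delta> p r x 0 < 0"
proof -
  have "phi ((r / norm x) *\<^sub>R x, 0) < 0"
    using phi_neg assms r_pos by simp
  moreover have "0 < (norm x / r) powr (\<theta> + 1)"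
    using assms r_pos by simp
  ultimately show ?thesis
    by (simp add: mu_eq_comparison_solution comparison_solution_0 w0_0 mult_pos_neg)
qed

lemma mu_unique_root:
  assumes "x \<noteq> 0"
  shows "\<exists>!\<tau>. \<tau> \<ge> 0 \<and> mu F phi \<alpha> \<theta> \<delta> p r x \<tau> = 0"
proof -
  let ?s = "norm x / r" and ?v = "comparison_solution \<delta> p (w0 F phi \<delta> p r x)"
  have "0 < ?s powr \<alpha>" "0 < ?s powr (\<theta> + 1)"
    using assms r_pos by simp_all
  have "\<exists>!t. 0 \<le> t \<and> ?v t 0 = 0"
  proof (rule comparison_solution_unique_root[where p=p and \<delta>=\<delta> and w="w0 F phi \<delta> p r x" and \<epsilon>=\<epsilon>])
    show "0 \<le> \<delta> j" if "j < p" for j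
      using h3 that by simp
    show "0 \<le> w0 F phi \<delta> p r x i" if "0 < i" "i < p" for i
      using w0_nonneg[OF that] .
    show "w0 F phi \<delta> p r x 0 < 0"
      using phi_neg assms r_pos by (simp add: w0_0)
  qed (use p_ge \<epsilon>_pos \<epsilon>_le_w0[OF assms] in simp_all)
  then obtain t0 where t0: "0 \<le> t0" "?v t0 0 = 0" and uniq: "\<And>t. 0 \<le> t \<Longrightarrow> ?v t 0 = 0 \<Longrightarrow> t = t0"
    by blast
  have mu_zero_iff: "mu F phi \<alpha> \<theta> \<delta> p r x \<tau> = 0 \<longleftrightarrow> ?v (?s powr \<alpha> * \<tau>) 0 = 0" for \<tau>
    using \<open>0 < ?s powr (\<theta> + 1)\<close> by (simp add: mu_eq_comparison_solution)
  show ?thesis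
  proof (rule ex1I[of _ "t0 / ?s powr \<alpha>"])
    show "t0 / ?s powr \<alpha> \<ge> 0 \<and> mu F phi \<alpha> \<theta> \<delta> p r x (t0 / ?s powr \<alpha>) = 0"
      using t0 \<open>0 < ?s powr \<alpha>\<close> by (simp add: mu_zero_iff)
    fix \<tau> assume "\<tau> \<ge> 0 \<and> mu F phi \<alpha> \<theta> \<delta> p r x \<tau> = 0"
    then have "?s powr \<alpha> * \<tau> = t0"
      using uniq \<open>0 < ?s powr \<alpha>\<close> by (simp add: mu_zero_iff)
    then show "\<tau> = t0 / ?s powr \<alpha>"
      using \<open>0 < ?s powr \<alpha>\<close> by (simp add: field_simps)
  qed
qed

lemma phi_xi_le_comparison_solution_on_sphere:
  assumes "norm y = r" "0 \<le> t" "t \<le> tau_ev xi T phi y"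
  shows "phi (xi y t) \<le> comparison_solution \<delta> p (w0 F phi \<delta> p r y) t 0"
proof -
  have "y \<noteq> 0" "y \<in> Z"
    using assms(1) r_pos D_sub by auto
  note \<tau>y = tau_ev_first_zero[OF \<open>y \<noteq> 0\<close>]
  show ?thesis
  proof (rule phi_xi_le_comparison_solution[OF p_ge \<tau>y(2)])
    show "lie F phi p (xi y s) \<le> (\<Sum>i<p. \<delta> i * lie F phi i (xi y s)) + w0 F phi \<delta> p r y p"
      if "s \<in> {0..tau_ev xi T phi y}" for s
    proof -
      have "ereal s < T y"
        using ereal_le_less_trans[OF _ \<tau>y(2)] that by simp
      then have "xi y s \<in> \<Xi>"
        using inv[OF \<open>y \<in> Z\<close>] phi_xi_nonpos_until_tau_ev[OF \<open>y \<noteq> 0\<close>] that by simp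
      with \<Xi>_sub have "xi y s \<in> ball 0 d"
        by blast
      from h1[OF this] show ?thesis
        by (simp add: w0_last[OF p_ge])
    qed
    show "lie F phi i (y, 0) \<le> w0 F phi \<delta> p r y i" if "i < p" for i
      using assms(1) r_pos that by (simp add: w0_def Let_def)
  qed (use assms h3 in auto)
qed

lemma phi_xi_le_mu:
  assumes "x \<noteq> 0" "0 \<le> t" "t \<le> tau_ev xi T phi x"
  shows "phi (xi x t) \<le> mu F phi \<alpha> \<theta> \<delta> p r x t"
proof -
  define s where "s = norm x / r"
  define y where "y = (r / norm x) *\<^sub>R x"
  have "0 < s" "norm y = r" "s *\<^sub>R y = x" "y \<noteq> 0"
    using projection_to_sphere[OF assms(1)] r_pos unfolding s_def y_def by auto
  have "s powr \<alpha> * t \<le> s powr \<alpha> * tau_ev xi T phi x"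
    using assms(3) by (intro mult_left_mono) auto
  also have "\<dots> \<le> tau_ev xi T phi y"
    using tau_ev_scaleR_le[OF \<open>0 < s\<close> \<open>y \<noteq> 0\<close>] \<open>s *\<^sub>R y = x\<close> by simp
  finally have "s powr \<alpha> * t \<le> tau_ev xi T phi y" .
  have "ereal t < T x" "ereal (s powr \<alpha> * t) < T y"
    using ereal_le_less_trans[OF assms(3) tau_ev_first_zero(2)[OF assms(1)]]
      ereal_le_less_trans[OF \<open>s powr \<alpha> * t \<le> tau_ev xi T phi y\<close> tau_ev_first_zero(2)[OF \<open>y \<noteq> 0\<close>]] .
  then have "xi x t = s *\<^sub>R xi y (s powr \<alpha> * t)"
    using xi_scaleR[OF \<open>0 < s\<close> \<open>0 \<le> t\<close>] \<open>s *\<^sub>R y = x\<close> by metis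
  then have "phi (xi x t) = s powr (\<theta> + 1) * phi (xi y (s powr \<alpha> * t))"
    using phi_hom[OF \<open>0 < s\<close>] by simp
  also have "\<dots> \<le> s powr (\<theta> + 1) * comparison_solution \<delta> p (w0 F phi \<delta> p r y) (s powr \<alpha> * t) 0"
    using phi_xi_le_comparison_solution_on_sphere[OF \<open>norm y = r\<close> _ \<open>s powr \<alpha> * t \<le> tau_ev xi T phi y\<close>]
      \<open>0 \<le> t\<close> by (simp add: mult_left_mono)
  also have "\<dots> = mu F phi \<alpha> \<theta> \<delta> p r x t"
    using w0_scaleR[OF \<open>0 < s\<close>, of F phi \<delta> p r y] \<open>s *\<^sub>R y = x\<close>
    by (simp add: mu_eq_comparison_solution s_def)
  finally show ?thesis .
qed

end

theorem theorem3:
  fixes f :: "real^'n \<Rightarrow> real^'m \<Rightarrow> real^'n"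
    and u :: "real^'n \<Rightarrow> real^'m"
    and phi :: "((real^'n) \<times> (real^'n)) \<Rightarrow> real"
    and \<alpha> \<theta> :: real
    and xi :: "real^'n \<Rightarrow> real \<Rightarrow> ((real^'n) \<times> (real^'n))"
    and T :: "real^'n \<Rightarrow> ereal"
    and Z :: "(real^'n) set"
    and \<Xi> :: "((real^'n) \<times> (real^'n)) set"
    and d \<epsilon> r :: real
    and p :: nat
    and \<delta> :: "nat \<Rightarrow> real"
  defines "F \<equiv> Fvf f u"
  assumes F_smooth: "smooth_fun F"
    and \<alpha>_ge: "\<alpha> \<ge> 1"
    and F_hom: "\<And>c z. c > 0 \<Longrightarrow> F (c *\<^sub>R z) = c powr (\<alpha> + 1) *\<^sub>R F z"
    and phi_smooth: "smooth_fun phi"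
    and \<theta>_ge: "\<theta> \<ge> 1"
    and phi_hom: "\<And>c z. c > 0 \<Longrightarrow> phi (c *\<^sub>R z) = c powr (\<theta> + 1) * phi z"
    (* xi(.;x) is the solution of  d/dt xi = F(xi), xi(0) = (x,0), on [0, T x) *)
    and T_pos: "\<And>x. T x > 0"
    and xi_init: "\<And>x. xi x 0 = (x, 0)"
    and xi_ode: "\<And>x t. 0 \<le> t \<Longrightarrow> ereal t < T x \<Longrightarrow>
                   (xi x has_vector_derivative F (xi x t)) (at t within {0..})"
    (* standing assumption (iii) *)
    and phi_neg: "\<And>x. x \<noteq> 0 \<Longrightarrow> phi (x, 0) < 0"
    and phi_zero: "\<And>x. x \<noteq> 0 \<Longrightarrow> \<exists>tx>0. ereal tx < T x \<and> phi (xi x tx) = 0"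
    (* standing assumption (iv) *)
    and Z_compact: "compact Z" and Z_nbhd: "\<exists>e>0. ball 0 e \<subseteq> Z"
    and \<Xi>_compact: "compact \<Xi>" and \<Xi>_nbhd: "\<exists>e>0. ball 0 e \<subseteq> \<Xi>"
    and inv: "\<And>x t. x \<in> Z \<Longrightarrow> 0 \<le> t \<Longrightarrow> ereal t < T x \<Longrightarrow>
                 phi (xi x t) \<le> 0 \<Longrightarrow> xi x t \<in> \<Xi>"
    (* standing assumption (v) *)
    and equil: "\<And>\<zeta>. f \<zeta> (u \<zeta>) = 0 \<longleftrightarrow> \<zeta> = 0"
    (* hypotheses of the theorem *)
    and d_pos: "d > 0" and \<Xi>_sub: "\<Xi> \<subseteq> ball 0 d"
    and p_ge: "p \<ge> 1" and \<epsilon>_pos: "\<epsilon> > 0"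
    and h1: "\<And>z. z \<in> ball 0 d \<Longrightarrow>
               lie F phi p z \<le> (\<Sum>i<p. \<delta> i * lie F phi i z) + \<delta> p"
    and h2: "\<And>x. x \<in> Z \<Longrightarrow> \<delta> 0 * phi (x, 0) + \<delta> p \<ge> \<epsilon>"
    and h3: "\<And>i. i \<le> p \<Longrightarrow> \<delta> i \<ge> 0"
    and r_pos: "r > 0" and D_sub: "sphere 0 r \<subseteq> Z"
  shows "(\<forall>x. x \<noteq> 0 \<longrightarrow> mu F phi \<alpha> \<theta> \<delta> p r x 0 < 0)
       \<and> (\<forall>x t. x \<noteq> 0 \<longrightarrow> 0 \<le> t \<longrightarrow> t \<le> tau_ev xi T phi x \<longrightarrow>
              mu F phi \<alpha> \<theta> \<delta> p r x t \<ge> phi (xi x t))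
       \<and> (\<forall>x t c. x \<noteq> 0 \<longrightarrow> t > 0 \<longrightarrow> c > 0 \<longrightarrow>
              mu F phi \<alpha> \<theta> \<delta> p r (c *\<^sub>R x) t
                = c powr (\<theta> + 1) * mu F phi \<alpha> \<theta> \<delta> p r x (c powr \<alpha> * t))
       \<and> (\<forall>x. x \<noteq> 0 \<longrightarrow> (\<exists>!\<tau>. \<tau> \<ge> 0 \<and> mu F phi \<alpha> \<theta> \<delta> p r x \<tau> = 0))"
proof -
  interpret triggering_bound F phi \<alpha> \<theta> xi T Z \<Xi> d \<epsilon> r p \<delta>
    by unfold_locales (use assms in auto)
  show ?thesis
    using mu_0_neg phi_xi_le_mu mu_scaleR[OF _ r_pos] mu_unique_root by blast
qed

end
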